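(* Let $\mathcal{T}=\mathcal{X}=\mathcal{Y}=\{0,1\}$ and $P\in\Delta_{\mathcal{T},\mathcal{X},\mathcal{Y}}$ with $P(T=0)>0$, $P(T=1)>0$. Assume that if condition (c) or (d) holds then condition (a) or (b) holds, where: (a) $H_P(X\mid T)=0$; (b) $H_P(Y\mid T)=0$; (c) $H_P(X\mid T=0)=0$ and $H_P(Y\mid T=1)=0$; (d) $H_P(X\mid T=1)=0$ and $H_P(Y\mid T=0)=0$. If $\tilde Q\in\arg\max_{Q\in\Delta_P}H_Q(T\mid X,Y)$ lies in the relative interior of $\Delta_P$, then under $\tilde Q$, $T$ is conditionally independent of $X$ given $Y$, or $T$ is conditionally independent of $Y$ given $X$.
   Context: $\Delta_{\mathcal{T},\mathcal{X},\mathcal{Y}}$ is the set of all joint distributions of $(T,X,Y)$. For $P$, $\Delta_P=\{Q\in\Delta_{\mathcal{T},\mathcal{X},\mathcal{Y}}: Q(X=x,T=t)=P(X=x,T=t),\ Q(Y=y,T=t)=P(Y=y,T=t)\ \forall x,y,t\}$. $H_P(X\mid T=t)$ is the entropy of the conditional distribution of $X$ given $T=t$. Conditions (a)–(d) are exactly the cases in which $\Delta_P$ is a single point. *)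

theory Defs
  imports "HOL-Analysis.Analysis"
begin

text \<open>Joint distributions of (T,X,Y) on {0,1}^3, encoded as vectors indexed by
  bool \<times> bool \<times> bool (False = 0, True = 1), component (t,x,y) = P(T=t,X=x,Y=y).
  Using the finite-dimensional vector type makes rel_interior available.\<close>

type_synonym dist3 = "real ^ (bool \<times> bool \<times> bool)"

definition is_dist :: "dist3 \<Rightarrow> bool" where
  "is_dist Q \<longleftrightarrow> (\<forall>i. Q $ i \<ge> 0) \<and> (\<Sum>i\<in>UNIV. Q $ i) = 1"

definition pT :: "dist3 \<Rightarrow> bool \<Rightarrow> real" where
  "pT Q t = (\<Sum>x\<in>UNIV. \<Sum>y\<in>UNIV. Q $ (t,x,y))"

definition pXT :: "dist3 \<Rightarrow> bool \<Rightarrow> bool \<Rightarrow> real" where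
  "pXT Q x t = (\<Sum>y\<in>UNIV. Q $ (t,x,y))"

definition pYT :: "dist3 \<Rightarrow> bool \<Rightarrow> bool \<Rightarrow> real" where
  "pYT Q y t = (\<Sum>x\<in>UNIV. Q $ (t,x,y))"

definition pXY :: "dist3 \<Rightarrow> bool \<Rightarrow> bool \<Rightarrow> real" where
  "pXY Q x y = (\<Sum>t\<in>UNIV. Q $ (t,x,y))"

definition pX :: "dist3 \<Rightarrow> bool \<Rightarrow> real" where
  "pX Q x = (\<Sum>t\<in>UNIV. \<Sum>y\<in>UNIV. Q $ (t,x,y))"

definition pY :: "dist3 \<Rightarrow> bool \<Rightarrow> real" where
  "pY Q y = (\<Sum>t\<in>UNIV. \<Sum>x\<in>UNIV. Q $ (t,x,y))"

definition DeltaP :: "dist3 \<Rightarrow> dist3 set" where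
  "DeltaP P = {Q. is_dist Q \<and> (\<forall>x t. pXT Q x t = pXT P x t) \<and> (\<forall>y t. pYT Q y t = pYT P y t)}"

definition negxlogx :: "real \<Rightarrow> real" where
  "negxlogx p = (if p \<le> 0 then 0 else - p * log 2 p)"

definition H_X_given_T_eq :: "dist3 \<Rightarrow> bool \<Rightarrow> real" where
  "H_X_given_T_eq P t = (\<Sum>x\<in>UNIV. negxlogx (pXT P x t / pT P t))"

definition H_Y_given_T_eq :: "dist3 \<Rightarrow> bool \<Rightarrow> real" where
  "H_Y_given_T_eq P t = (\<Sum>y\<in>UNIV. negxlogx (pYT P y t / pT P t))"

definition H_X_given_T :: "dist3 \<Rightarrow> real" where
  "H_X_given_T P = (\<Sum>t\<in>UNIV. pT P t * H_X_given_T_eq P t)"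

definition H_Y_given_T :: "dist3 \<Rightarrow> real" where
  "H_Y_given_T P = (\<Sum>t\<in>UNIV. pT P t * H_Y_given_T_eq P t)"

definition H_T_given_XY :: "dist3 \<Rightarrow> real" where
  "H_T_given_XY Q = (\<Sum>x\<in>UNIV. \<Sum>y\<in>UNIV.
      pXY Q x y * (\<Sum>t\<in>UNIV. negxlogx (Q $ (t,x,y) / pXY Q x y)))"

definition T_indep_X_given_Y :: "dist3 \<Rightarrow> bool" where
  "T_indep_X_given_Y Q \<longleftrightarrow> (\<forall>t x y. Q $ (t,x,y) * pY Q y = pYT Q y t * pXY Q x y)"

definition T_indep_Y_given_X :: "dist3 \<Rightarrow> bool" where
  "T_indep_Y_given_X Q \<longleftrightarrow> (\<forall>t x y. Q $ (t,x,y) * pX Q x = pXT Q x t * pXY Q x y)"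

end

theory Submission
  imports Defs
begin

(*
  Adding s to the diagonal and -s to the anti-diagonal of the
  2x2 table Q(t,.,.) keeps the (X,T) and (Y,T) marginals fixed. Since Q lies in the
  relative interior of DeltaP, each table is either strictly positive or has a zero row
  (H(X|T=t) = 0) or a zero column (H(Y|T=t) = 0). For a positive table, stationarity of
  H(T|X,Y) along this direction says that r(x,y) = Q(T=t | X=x, Y=y) has unit odds ratio
  r(1,1) r(0,0) = r(1,0) r(0,1). If both tables are positive, 1 - r has unit odds ratio too,
  so the diagonal and the anti-diagonal of r have equal sums and equal products; hence r
  is constant in x or in y. A zero row or column in one table combined with a positive or
  similarly degenerate other table is handled directly; a zero row in one table together
  with a zero column in the other is exactly the case the hypothesis rules out.
*)

lemma sum_UNIV_bool: "(\<Sum>b\<in>UNIV. f b) = f True + f False"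
  by (simp add: UNIV_bool add.commute)

lemma sum_UNIV_bool_at: "(\<Sum>b\<in>UNIV. f b) = f t + f (\<not> t)"
  by (cases t) (simp_all add: sum_UNIV_bool add.commute)

lemma sum_UNIV_prod: "(\<Sum>p\<in>UNIV. f p) = (\<Sum>a\<in>UNIV. \<Sum>b\<in>UNIV. f (a,b))"
  by (simp add: sum.cartesian_product)

lemma pXY_eq: "pXY Q x y = Q $ (t,x,y) + Q $ (\<not> t,x,y)"
  by (simp add: pXY_def sum_UNIV_bool_at[of _ t])

lemma pT_eq_pXT: "pT Q t = pXT Q True t + pXT Q False t"
  by (simp add: pT_def pXT_def sum_UNIV_bool)

lemma pT_eq_pYT: "pT Q t = pYT Q True t + pYT Q False t"
  by (simp add: pT_def pYT_def sum_UNIV_bool)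

lemma pXT_nonneg: "is_dist Q \<Longrightarrow> 0 \<le> pXT Q x t"
  by (simp add: is_dist_def pXT_def sum_nonneg)

lemma pYT_nonneg: "is_dist Q \<Longrightarrow> 0 \<le> pYT Q y t"
  by (simp add: is_dist_def pYT_def sum_nonneg)

definition zero_row :: "dist3 \<Rightarrow> bool \<Rightarrow> bool" where
  "zero_row Q t \<longleftrightarrow> (\<exists>x. \<forall>y. Q $ (t,x,y) = 0)"

definition zero_col :: "dist3 \<Rightarrow> bool \<Rightarrow> bool" where
  "zero_col Q t \<longleftrightarrow> (\<exists>y. \<forall>x. Q $ (t,x,y) = 0)"

lemma zero_row_iff_pXT: "\<forall>i. 0 \<le> Q $ i \<Longrightarrow> zero_row Q t \<longleftrightarrow> (\<exists>x. pXT Q x t = 0)"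
  by (simp add: zero_row_def pXT_def sum_nonneg_eq_0_iff)

lemma zero_col_iff_pYT: "\<forall>i. 0 \<le> Q $ i \<Longrightarrow> zero_col Q t \<longleftrightarrow> (\<exists>y. pYT Q y t = 0)"
  by (simp add: zero_col_def pYT_def sum_nonneg_eq_0_iff)

section \<open>Entropy\<close>

lemma negxlogx_pos: "0 < p \<Longrightarrow> p < 1 \<Longrightarrow> 0 < negxlogx p"
  by (simp add: negxlogx_def mult_pos_neg)

lemma negxlogx_nonneg: "0 \<le> p \<Longrightarrow> p \<le> 1 \<Longrightarrow> 0 \<le> negxlogx p"
  by (cases "p = 1") (auto simp: negxlogx_def mult_nonneg_nonpos)

lemma negxlogx_divide:
  assumes "0 < m" "0 \<le> q"
  shows "m * negxlogx (q / m) = negxlogx q + q * log 2 m"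
proof (cases "q = 0")
  case False
  with assms have "\<not> q \<le> 0" "\<not> q / m \<le> 0" by (simp_all add: not_le)
  with assms show ?thesis
    by (simp add: negxlogx_def log_divide algebra_simps)
qed (simp add: negxlogx_def)

lemma negxlogx_grouping:
  assumes "0 \<le> u" "0 \<le> v"
  shows "(u + v) * (negxlogx (u / (u + v)) + negxlogx (v / (u + v)))
       = negxlogx u + negxlogx v - negxlogx (u + v)"
proof (cases "u + v = 0")
  case True
  with assms show ?thesis by (simp add: negxlogx_def)
next
  case False
  with assms have "0 < u + v" by simp
  with assms show ?thesis
    using negxlogx_divide[of "u + v" u] negxlogx_divide[of "u + v" v]
    by (simp add: distrib_left negxlogx_def algebra_simps)
qed

lemma binary_entropy_nonneg:
  assumes "0 \<le> u" "0 \<le> v"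
  shows "0 \<le> negxlogx (u / (u + v)) + negxlogx (v / (u + v))"
  using assms by (cases "u + v = 0") (auto intro!: add_nonneg_nonneg negxlogx_nonneg simp: field_simps)

lemma binary_entropy_eq_0_iff:
  assumes "0 \<le> u" "0 \<le> v" "0 < u + v"
  shows "negxlogx (u / (u + v)) + negxlogx (v / (u + v)) = 0 \<longleftrightarrow> u = 0 \<or> v = 0"
proof (cases "u = 0 \<or> v = 0")
  case True
  with assms show ?thesis by (auto simp: negxlogx_def)
next
  case False
  with assms have "0 < negxlogx (u / (u + v))" "0 < negxlogx (v / (u + v))"
    by (auto intro!: negxlogx_pos simp: field_simps)
  with False show ?thesis by simp
qed

lemma H_X_given_T_eq_nonneg: "is_dist P \<Longrightarrow> 0 \<le> H_X_given_T_eq P t"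
  using binary_entropy_nonneg[OF pXT_nonneg pXT_nonneg]
  by (simp add: H_X_given_T_eq_def pT_eq_pXT sum_UNIV_bool)

lemma H_Y_given_T_eq_nonneg: "is_dist P \<Longrightarrow> 0 \<le> H_Y_given_T_eq P t"
  using binary_entropy_nonneg[OF pYT_nonneg pYT_nonneg]
  by (simp add: H_Y_given_T_eq_def pT_eq_pYT sum_UNIV_bool)

lemma H_X_given_T_eq_eq_0_iff:
  assumes "is_dist P" "0 < pT P t"
  shows "H_X_given_T_eq P t = 0 \<longleftrightarrow> (\<exists>x. pXT P x t = 0)"
  using assms binary_entropy_eq_0_iff[of "pXT P True t" "pXT P False t"] pXT_nonneg[OF assms(1)]
  by (simp add: H_X_given_T_eq_def pT_eq_pXT sum_UNIV_bool ex_bool_eq)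

lemma H_Y_given_T_eq_eq_0_iff:
  assumes "is_dist P" "0 < pT P t"
  shows "H_Y_given_T_eq P t = 0 \<longleftrightarrow> (\<exists>y. pYT P y t = 0)"
  using assms binary_entropy_eq_0_iff[of "pYT P True t" "pYT P False t"] pYT_nonneg[OF assms(1)]
  by (simp add: H_Y_given_T_eq_def pT_eq_pYT sum_UNIV_bool ex_bool_eq)

lemma H_X_given_T_eq_0_iff:
  assumes "is_dist P" "\<forall>t. 0 < pT P t"
  shows "H_X_given_T P = 0 \<longleftrightarrow> (\<forall>t. H_X_given_T_eq P t = 0)"
proof -
  have "0 \<le> pT P t * H_X_given_T_eq P t" "pT P t \<noteq> 0" for t
    using assms(2)[rule_format, of t] H_X_given_T_eq_nonneg[OF assms(1), of t] by simp_all
  then show ?thesis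
    by (simp add: H_X_given_T_def sum_nonneg_eq_0_iff)
qed

lemma H_Y_given_T_eq_0_iff:
  assumes "is_dist P" "\<forall>t. 0 < pT P t"
  shows "H_Y_given_T P = 0 \<longleftrightarrow> (\<forall>t. H_Y_given_T_eq P t = 0)"
proof -
  have "0 \<le> pT P t * H_Y_given_T_eq P t" "pT P t \<noteq> 0" for t
    using assms(2)[rule_format, of t] H_Y_given_T_eq_nonneg[OF assms(1), of t] by simp_all
  then show ?thesis
    by (simp add: H_Y_given_T_def sum_nonneg_eq_0_iff)
qed

lemma H_T_given_XY_eq:
  assumes "\<forall>i. 0 \<le> Q $ i"
  shows "H_T_given_XY Q = (\<Sum>x\<in>UNIV. \<Sum>y\<in>UNIV. (\<Sum>t\<in>UNIV. negxlogx (Q $ (t,x,y))) - negxlogx (pXY Q x y))"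
  unfolding H_T_given_XY_def pXY_def
  using assms by (intro sum.cong refl) (simp add: sum_UNIV_bool negxlogx_grouping)

lemma negxlogx_has_real_derivative:
  assumes "0 < p"
  shows "(negxlogx has_real_derivative - (ln p + 1) / ln 2) (at p)"
proof (rule has_field_derivative_transform_within_open[where S = "{0<..}"])
  show "((\<lambda>u. - (u * ln u) / ln 2) has_real_derivative - (ln p + 1) / ln 2) (at p)"
    using assms by (auto intro!: derivative_eq_intros simp: field_simps)
  show "- (u * ln u) / ln 2 = negxlogx u" if "u \<in> {0<..}" for u
    using that by (simp add: negxlogx_def log_def)
qed (use assms in auto)

lemma negxlogx_line_has_real_derivative:
  assumes "0 < p \<or> v = 0"
  shows "((\<lambda>s. negxlogx (p + s * v)) has_real_derivative - v * (ln p + 1) / ln 2) (at 0)"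
  using assms
proof
  assume "0 < p"
  then have outer: "(negxlogx has_real_derivative - (ln p + 1) / ln 2) (at (p + 0 * v))"
    using negxlogx_has_real_derivative by simp
  have inner: "((\<lambda>s. p + s * v) has_real_derivative v) (at 0)"
    by (auto intro!: derivative_eq_intros)
  show ?thesis
    using DERIV_chain2[of negxlogx _ "\<lambda>s. p + s * v" 0, OF outer inner] by (simp add: algebra_simps)
qed simp

section \<open>Tilting a slice of the joint distribution\<close>

lemma rel_interior_line_nbhd:
  fixes S :: "'a::euclidean_space set"
  assumes "Q \<in> rel_interior S" "Q + c *\<^sub>R D \<in> S" "c \<noteq> 0"
  obtains d where "d > 0" "\<And>s. \<bar>s\<bar> < d \<Longrightarrow> Q + s *\<^sub>R D \<in> S"
proof -
  obtain e where e: "e > 0" "ball Q e \<inter> affine hull S \<subseteq> S" and "Q \<in> S"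
    using assms(1) by (auto simp: mem_rel_interior_ball)
  have line: "Q + s *\<^sub>R D \<in> affine hull S" for s
  proof -
    have "(1 - s/c) *\<^sub>R Q + (s/c) *\<^sub>R (Q + c *\<^sub>R D) \<in> affine hull S"
      using \<open>Q \<in> S\<close> assms(2) by (intro mem_affine affine_affine_hull hull_inc) auto
    also have "(1 - s/c) *\<^sub>R Q + (s/c) *\<^sub>R (Q + c *\<^sub>R D) = Q + s *\<^sub>R D"
      using assms(3) by (simp add: algebra_simps)
    finally show ?thesis .
  qed
  define d where "d = e / (norm D + 1)"
  have "Q + s *\<^sub>R D \<in> S" if "\<bar>s\<bar> < d" for s
  proof -
    have "norm (s *\<^sub>R D) \<le> \<bar>s\<bar> * (norm D + 1)"
      by (simp add: mult_left_mono)
    also have "\<dots> < e"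
      using that by (simp add: d_def field_simps add_pos_nonneg)
    finally show ?thesis
      using e(2) line[of s] by (auto simp: dist_norm)
  qed
  moreover have "d > 0"
    using e(1) by (simp add: d_def add_nonneg_pos)
  ultimately show ?thesis using that by blast
qed

definition tilt :: "bool \<Rightarrow> dist3" where
  "tilt t = (\<chi> i. case i of (t',x,y) \<Rightarrow> if t' = t then (if x = y then 1 else -1) else 0)"

lemma tilt_nth: "tilt t $ (t',x,y) = (if t' = t then (if x = y then 1 else -1) else 0)"
  by (simp add: tilt_def)

lemma add_tilt_nth:
  "(Q + s *\<^sub>R tilt t) $ (t',x,y) = Q $ (t',x,y) + (if t' = t then (if x = y then s else -s) else 0)"
  by (simp add: tilt_nth)

lemma add_tilt_in_DeltaP_iff:
  assumes "Q \<in> DeltaP P"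
  shows "Q + s *\<^sub>R tilt t \<in> DeltaP P \<longleftrightarrow> (\<forall>x y. 0 \<le> Q $ (t,x,y) + (if x = y then s else -s))"
proof -
  have "pXT (Q + s *\<^sub>R tilt t) = pXT Q" "pYT (Q + s *\<^sub>R tilt t) = pYT Q"
    "(\<Sum>i\<in>UNIV. (Q + s *\<^sub>R tilt t) $ i) = (\<Sum>i\<in>UNIV. Q $ i)"
    by (auto simp: fun_eq_iff pXT_def pYT_def tilt_nth sum_UNIV_bool sum_UNIV_prod)
  moreover have "(\<forall>i. 0 \<le> (Q + s *\<^sub>R tilt t) $ i) \<longleftrightarrow> (\<forall>x y. 0 \<le> Q $ (t,x,y) + (if x = y then s else -s))"
    using assms by (auto simp: DeltaP_def is_dist_def add_tilt_nth simp del: vector_add_component)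
  ultimately show ?thesis
    using assms by (simp add: DeltaP_def is_dist_def)
qed

lemma tilt_nonneg_nbhd:
  assumes nonneg: "\<forall>i. 0 \<le> Q $ i" and pos: "\<forall>x y. 0 < Q $ (t,x,y)"
  obtains d where "0 < d" "\<And>s i. \<bar>s\<bar> < d \<Longrightarrow> 0 \<le> (Q + s *\<^sub>R tilt t) $ i"
proof
  define d where "d = Min (range (\<lambda>(x,y). Q $ (t,x,y)))"
  show "0 < d"
    using pos by (auto simp: d_def)
  have d_le: "d \<le> Q $ (t,x,y)" for x y
    unfolding d_def by (rule Min_le) auto
  show "0 \<le> (Q + s *\<^sub>R tilt t) $ i" if "\<bar>s\<bar> < d" for s i
  proof -
    obtain t' x y where "i = (t',x,y)"
      by (metis prod.exhaust)
    then show ?thesis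
      using that nonneg d_le[of x y]
      by (cases "t' = t") (auto simp: add_tilt_nth simp del: vector_add_component)
  qed
qed

lemma rel_interior_tilt_pos:
  assumes "Q \<in> rel_interior (DeltaP P)" "Q + c *\<^sub>R tilt t \<in> DeltaP P" "c \<noteq> 0"
  shows "0 < Q $ (t,x,y)"
proof -
  obtain d where "d > 0" and line: "\<And>s. \<bar>s\<bar> < d \<Longrightarrow> Q + s *\<^sub>R tilt t \<in> DeltaP P"
    using rel_interior_line_nbhd[OF assms] by blast
  have Q: "Q \<in> DeltaP P"
    using assms(1) rel_interior_subset by blast
  have "0 \<le> Q $ (t,x,y) + (if x = y then s else -s)" if "\<bar>s\<bar> < d" for s
    using line[OF that] add_tilt_in_DeltaP_iff[OF Q] by blast
  from this[of "d/2"] this[of "-(d/2)"] show ?thesis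
    using \<open>d > 0\<close> by (cases "x = y") auto
qed

lemma rel_interior_slice_cases:
  assumes "Q \<in> rel_interior (DeltaP P)"
  shows "(\<forall>x y. 0 < Q $ (t,x,y)) \<or> zero_row Q t \<or> zero_col Q t"
proof -
  have Q: "Q \<in> DeltaP P"
    using assms rel_interior_subset by blast
  have nonneg: "0 \<le> Q $ (t,x,y)" for x y
    using Q by (simp add: DeltaP_def is_dist_def)
  consider (anti) "0 < Q $ (t,True,False)" "0 < Q $ (t,False,True)"
    | (diag) "0 < Q $ (t,True,True)" "0 < Q $ (t,False,False)"
    | (zeros) "Q $ (t,True,False) = 0 \<or> Q $ (t,False,True) = 0"
        "Q $ (t,True,True) = 0 \<or> Q $ (t,False,False) = 0"
    using nonneg[of True False] nonneg[of False True] nonneg[of True True] nonneg[of False False]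
    by (metis less_eq_real_def)
  then show ?thesis
  proof cases
    case anti
    let ?c = "min (Q $ (t,True,False)) (Q $ (t,False,True))"
    have "Q + ?c *\<^sub>R tilt t \<in> DeltaP P"
      unfolding add_tilt_in_DeltaP_iff[OF Q] using anti nonneg
      by (auto simp: all_bool_eq add_nonneg_pos less_imp_le)
    with anti show ?thesis
      using rel_interior_tilt_pos[OF assms] by (metis min_less_iff_conj less_irrefl)
  next
    case diag
    let ?c = "- min (Q $ (t,True,True)) (Q $ (t,False,False))"
    have "Q + ?c *\<^sub>R tilt t \<in> DeltaP P"
      unfolding add_tilt_in_DeltaP_iff[OF Q] using diag nonneg
      by (auto simp: all_bool_eq add_nonneg_pos less_imp_le)
    with diag show ?thesis
      using rel_interior_tilt_pos[OF assms] by (metis min_less_iff_conj neg_equal_0_iff_equal less_irrefl)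
  next
    case zeros
    then show ?thesis
      unfolding zero_row_def zero_col_def by (metis (full_types))
  qed
qed

section \<open>Stationarity of the maximiser\<close>

lemma H_T_given_XY_tilt_has_real_derivative:
  assumes nonneg: "\<forall>i. 0 \<le> Q $ i" and pos: "\<forall>x y. 0 < Q $ (t,x,y)"
  shows "((\<lambda>s. H_T_given_XY (Q + s *\<^sub>R tilt t)) has_real_derivative
           (\<Sum>x\<in>UNIV. \<Sum>y\<in>UNIV. (if x = y then 1 else -1) * (ln (pXY Q x y) - ln (Q $ (t,x,y)))) / ln 2)
         (at 0)"
proof -
  define \<sigma> :: "bool \<Rightarrow> bool \<Rightarrow> real" where "\<sigma> x y = (if x = y then 1 else -1)" for x y
  obtain d where "0 < d" and tilt_nonneg: "\<And>s i. \<bar>s\<bar> < d \<Longrightarrow> 0 \<le> (Q + s *\<^sub>R tilt t) $ i"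
    using tilt_nonneg_nbhd[OF assms] by blast
  have pXY_pos: "0 < pXY Q x y" for x y
    using pos nonneg by (simp add: pXY_eq[of _ _ _ t] add_pos_nonneg)
  define h where "h s = (\<Sum>x\<in>UNIV. \<Sum>y\<in>UNIV.
      (\<Sum>t'\<in>UNIV. negxlogx (Q $ (t',x,y) + s * tilt t $ (t',x,y))) - negxlogx (pXY Q x y + s * \<sigma> x y))" for s
  have H_eq_h: "H_T_given_XY (Q + s *\<^sub>R tilt t) = h s" if "s \<in> {-d<..<d}" for s
  proof -
    have nonneg': "\<forall>i. 0 \<le> (Q + s *\<^sub>R tilt t) $ i"
      using that by (intro allI tilt_nonneg) (simp add: abs_less_iff)
    have "pXY (Q + s *\<^sub>R tilt t) x y = pXY Q x y + s * \<sigma> x y" for x y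
      by (simp add: pXY_eq[of _ _ _ t] tilt_nth \<sigma>_def)
    then show ?thesis
      by (simp add: H_T_given_XY_eq[OF nonneg'] h_def)
  qed
  have "(h has_real_derivative
      (\<Sum>x\<in>UNIV. \<Sum>y\<in>UNIV. (\<Sum>t'\<in>UNIV. - tilt t $ (t',x,y) * (ln (Q $ (t',x,y)) + 1) / ln 2)
         - - \<sigma> x y * (ln (pXY Q x y) + 1) / ln 2)) (at 0)"
    unfolding h_def[abs_def]
    using pos pXY_pos by (intro DERIV_sum DERIV_diff negxlogx_line_has_real_derivative) (auto simp: tilt_nth)
  also have "(\<Sum>x\<in>UNIV. \<Sum>y\<in>UNIV. (\<Sum>t'\<in>UNIV. - tilt t $ (t',x,y) * (ln (Q $ (t',x,y)) + 1) / ln 2)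
         - - \<sigma> x y * (ln (pXY Q x y) + 1) / ln 2)
      = (\<Sum>x\<in>UNIV. \<Sum>y\<in>UNIV. \<sigma> x y * (ln (pXY Q x y) - ln (Q $ (t,x,y)))) / ln 2"
    unfolding sum_divide_distrib
    by (intro sum.cong refl) (simp add: sum_UNIV_bool_at[of _ t] tilt_nth \<sigma>_def field_simps)
  finally have "(h has_real_derivative
      (\<Sum>x\<in>UNIV. \<Sum>y\<in>UNIV. \<sigma> x y * (ln (pXY Q x y) - ln (Q $ (t,x,y)))) / ln 2) (at 0)" .
  then show ?thesis
    unfolding \<sigma>_def
  proof (rule has_field_derivative_transform_within_open[where S = "{-d<..<d}"])
    show "0 \<in> {-d<..<d}"
      using \<open>0 < d\<close> by simp
  qed (use H_eq_h in auto)
qed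

lemma cross_ratio_eq_if_ln_sum_eq_0:
  fixes a p :: "bool \<Rightarrow> bool \<Rightarrow> real"
  assumes "\<forall>x y. 0 < a x y" "\<forall>x y. 0 < p x y"
    and "(\<Sum>x\<in>UNIV. \<Sum>y\<in>UNIV. (if x = y then 1 else -1) * (ln (p x y) - ln (a x y))) = 0"
  shows "a True True * a False False * (p True False * p False True)
       = a True False * a False True * (p True True * p False False)"
proof -
  have pos: "0 < a x y" "0 < p x y" for x y
    using assms(1,2) by auto
  have "a True True * a False False * (p True False * p False True)
      = exp (ln (a True True) + ln (a False False) + (ln (p True False) + ln (p False True)))"
    using pos by (simp add: exp_add)
  also have "\<dots> = exp (ln (a True False) + ln (a False True) + (ln (p True True) + ln (p False False)))"
    using assms(3) by (simp add: sum_UNIV_bool algebra_simps)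
  also have "\<dots> = a True False * a False True * (p True True * p False False)"
    using pos by (simp add: exp_add)
  finally show ?thesis .
qed

(* The odds ratio of Q(T = t | X = x, Y = y) over the table of (x, y) is 1, denominators cleared. *)
definition unit_cross_ratio :: "dist3 \<Rightarrow> bool \<Rightarrow> bool" where
  "unit_cross_ratio Q t \<longleftrightarrow>
     Q $ (t,True,True) * Q $ (t,False,False) * (pXY Q True False * pXY Q False True) =
     Q $ (t,True,False) * Q $ (t,False,True) * (pXY Q True True * pXY Q False False)"

lemma maximizer_unit_cross_ratio:
  assumes Q: "Q \<in> DeltaP P" and max: "\<forall>Q'\<in>DeltaP P. H_T_given_XY Q' \<le> H_T_given_XY Q"
    and pos: "\<forall>x y. 0 < Q $ (t,x,y)"
  shows "unit_cross_ratio Q t"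
proof -
  have nonneg: "\<forall>i. 0 \<le> Q $ i"
    using Q by (simp add: DeltaP_def is_dist_def)
  obtain d where "0 < d" and tilt_nonneg: "\<And>s i. \<bar>s\<bar> < d \<Longrightarrow> 0 \<le> (Q + s *\<^sub>R tilt t) $ i"
    using tilt_nonneg_nbhd[OF nonneg pos] by blast
  have "Q + s *\<^sub>R tilt t \<in> DeltaP P" if "\<bar>s\<bar> < d" for s
  proof -
    have "0 \<le> Q $ (t,x,y) + (if x = y then s else -s)" for x y
      using tilt_nonneg[OF that, of "(t,x,y)"] unfolding add_tilt_nth by simp
    then show ?thesis
      using add_tilt_in_DeltaP_iff[OF Q] by blast
  qed
  with max have "\<forall>s. \<bar>0 - s\<bar> < d \<longrightarrow> H_T_given_XY (Q + s *\<^sub>R tilt t) \<le> H_T_given_XY (Q + 0 *\<^sub>R tilt t)"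
    by simp
  from DERIV_local_max[OF H_T_given_XY_tilt_has_real_derivative[OF nonneg pos] \<open>0 < d\<close> this]
  have "(\<Sum>x\<in>UNIV. \<Sum>y\<in>UNIV. (if x = y then 1 else -1) * (ln (pXY Q x y) - ln (Q $ (t,x,y)))) = 0"
    by simp
  moreover have "0 < pXY Q x y" for x y
    using pos nonneg by (simp add: pXY_eq[of _ _ _ t] add_pos_nonneg)
  ultimately show ?thesis
    unfolding unit_cross_ratio_def using pos
    by (intro cross_ratio_eq_if_ln_sum_eq_0[where a = "\<lambda>x y. Q $ (t,x,y)"]) auto
qed

section \<open>Conditional independence\<close>

(* Within the table Y = y each defining equation reads (entry * total - row sum * column sum)
   = +-det, so independence amounts to one vanishing 2x2 determinant per y. *)
lemma T_indep_X_given_Y_iff: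
  "T_indep_X_given_Y Q \<longleftrightarrow> (\<forall>y. Q $ (t,True,y) * Q $ (\<not>t,False,y) = Q $ (\<not>t,True,y) * Q $ (t,False,y))"
  unfolding T_indep_X_given_Y_def pY_def pYT_def pXY_def
  by (cases t) (simp_all add: sum_UNIV_bool all_bool_eq; intro iffI conjI; elim conjE; algebra)+

lemma T_indep_Y_given_X_iff:
  "T_indep_Y_given_X Q \<longleftrightarrow> (\<forall>x. Q $ (t,x,True) * Q $ (\<not>t,x,False) = Q $ (\<not>t,x,True) * Q $ (t,x,False))"
  unfolding T_indep_Y_given_X_def pX_def pXT_def pXY_def
  by (cases t) (simp_all add: sum_UNIV_bool all_bool_eq; intro iffI conjI; elim conjE; algebra)+

lemma T_indep_if_zero_rows:
  assumes "zero_row Q False" "zero_row Q True"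
  shows "T_indep_X_given_Y Q \<or> T_indep_Y_given_X Q"
proof -
  obtain x0 x1 where "\<forall>y. Q $ (False,x0,y) = 0" "\<forall>y. Q $ (True,x1,y) = 0"
    using assms by (auto simp: zero_row_def)
  then show ?thesis
    unfolding T_indep_X_given_Y_iff[of _ False] T_indep_Y_given_X_iff[of _ False]
    by (cases x0; cases x1) (auto simp: all_bool_eq)
qed

lemma T_indep_if_zero_cols:
  assumes "zero_col Q False" "zero_col Q True"
  shows "T_indep_X_given_Y Q \<or> T_indep_Y_given_X Q"
proof -
  obtain y0 y1 where "\<forall>x. Q $ (False,x,y0) = 0" "\<forall>x. Q $ (True,x,y1) = 0"
    using assms by (auto simp: zero_col_def)
  then show ?thesis
    unfolding T_indep_X_given_Y_iff[of _ False] T_indep_Y_given_X_iff[of _ False]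
    by (cases y0; cases y1) (auto simp: all_bool_eq)
qed

lemma T_indep_Y_given_X_if_zero_row:
  assumes cross: "unit_cross_ratio Q t" and pos: "\<forall>x y. 0 < Q $ (t,x,y)" and "zero_row Q (\<not>t)"
  shows "T_indep_Y_given_X Q"
proof -
  obtain x0 where zero: "\<forall>y. Q $ (\<not>t,x0,y) = 0"
    using assms(3) by (auto simp: zero_row_def)
  have nz: "Q $ (t,x,y) \<noteq> 0" for x y
    using pos by (metis less_irrefl)
  have "Q $ (t,x,True) * Q $ (\<not>t,x,False) = Q $ (\<not>t,x,True) * Q $ (t,x,False)" for x
  proof (cases "x = x0")
    case False
    then consider "x0 = True" "x = False" | "x0 = False" "x = True"
      by auto
    then show ?thesis
      using cross zero nz unfolding unit_cross_ratio_def pXY_eq[of Q _ _ t]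
      by cases (simp_all add: algebra_simps)
  qed (simp add: zero)
  then show ?thesis
    by (simp add: T_indep_Y_given_X_iff[of _ t])
qed

lemma T_indep_X_given_Y_if_zero_col:
  assumes cross: "unit_cross_ratio Q t" and pos: "\<forall>x y. 0 < Q $ (t,x,y)" and "zero_col Q (\<not>t)"
  shows "T_indep_X_given_Y Q"
proof -
  obtain y0 where zero: "\<forall>x. Q $ (\<not>t,x,y0) = 0"
    using assms(3) by (auto simp: zero_col_def)
  have nz: "Q $ (t,x,y) \<noteq> 0" for x y
    using pos by (metis less_irrefl)
  have "Q $ (t,True,y) * Q $ (\<not>t,False,y) = Q $ (\<not>t,True,y) * Q $ (t,False,y)" for y
  proof (cases "y = y0")
    case False
    then consider "y0 = True" "y = False" | "y0 = False" "y = True"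
      by auto
    then show ?thesis
      using cross zero nz unfolding unit_cross_ratio_def pXY_eq[of Q _ _ t]
      by cases (simp_all add: algebra_simps)
  qed (simp add: zero)
  then show ?thesis
    by (simp add: T_indep_X_given_Y_iff[of _ t])
qed

lemma T_indep_if_unit_cross_ratios:
  assumes cross: "unit_cross_ratio Q False" "unit_cross_ratio Q True"
    and pos: "\<forall>t x y. 0 < Q $ (t,x,y)"
  shows "T_indep_X_given_Y Q \<or> T_indep_Y_given_X Q"
proof -
  have nzQ: "Q $ (t,x,y) \<noteq> 0" for t x y
    using pos by (metis less_irrefl)
  have nzP: "Q $ (True,x,y) + Q $ (False,x,y) \<noteq> 0" for x y
    using pos by (metis add_pos_pos less_irrefl)
  note eqs = cross[unfolded unit_cross_ratio_def pXY_def sum_UNIV_bool]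
    nzQ[of False True True] nzQ[of False True False] nzQ[of False False True] nzQ[of False False False]
    nzQ[of True True True] nzQ[of True True False] nzQ[of True False True] nzQ[of True False False]
    nzP[of True True] nzP[of True False] nzP[of False True] nzP[of False False]
  have "(Q $ (False,True,False) * Q $ (True,False,False) - Q $ (True,True,False) * Q $ (False,False,False))
      * (Q $ (False,False,True) * Q $ (True,False,False) - Q $ (True,False,True) * Q $ (False,False,False)) = 0"
    using eqs by algebra
  then consider
      "Q $ (False,True,False) * Q $ (True,False,False) = Q $ (True,True,False) * Q $ (False,False,False)"
    | "Q $ (False,False,True) * Q $ (True,False,False) = Q $ (True,False,True) * Q $ (False,False,False)"
    by auto
  then show ?thesis
  proof cases
    case 1
    with eqs have "Q $ (False,True,True) * Q $ (True,False,True) = Q $ (True,True,True) * Q $ (False,False,True)"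
      by algebra
    with 1 show ?thesis
      by (simp add: T_indep_X_given_Y_iff[of _ False] all_bool_eq)
  next
    case 2
    with eqs have "Q $ (False,True,True) * Q $ (True,True,False) = Q $ (True,True,True) * Q $ (False,True,False)"
      by algebra
    with 2 show ?thesis
      by (simp add: T_indep_Y_given_X_iff[of _ False] all_bool_eq)
  qed
qed

lemma T_indep_if_slice_cases:
  assumes slices: "\<forall>t. (\<forall>x y. 0 < Q $ (t,x,y)) \<and> unit_cross_ratio Q t \<or> zero_row Q t \<or> zero_col Q t"
    and mixed: "(zero_row Q False \<and> zero_col Q True) \<or> (zero_row Q True \<and> zero_col Q False)
      \<longrightarrow> (zero_row Q False \<and> zero_row Q True) \<or> (zero_col Q False \<and> zero_col Q True)"
  shows "T_indep_X_given_Y Q \<or> T_indep_Y_given_X Q"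
proof (cases "\<exists>t. (\<forall>x y. 0 < Q $ (t,x,y)) \<and> unit_cross_ratio Q t")
  case True
  then obtain t where pos: "\<forall>x y. 0 < Q $ (t,x,y)" and cross: "unit_cross_ratio Q t"
    by blast
  from slices consider "(\<forall>x y. 0 < Q $ (\<not>t,x,y)) \<and> unit_cross_ratio Q (\<not>t)"
    | "zero_row Q (\<not>t)" | "zero_col Q (\<not>t)"
    by blast
  then show ?thesis
  proof cases
    case 1
    with pos cross have "unit_cross_ratio Q False" "unit_cross_ratio Q True" "\<forall>t x y. 0 < Q $ (t,x,y)"
      by (cases t; auto simp: all_bool_eq)+
    then show ?thesis
      by (rule T_indep_if_unit_cross_ratios)
  qed (use T_indep_Y_given_X_if_zero_row[OF cross pos] T_indep_X_given_Y_if_zero_col[OF cross pos] in auto)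
next
  case False
  with slices have "zero_row Q t \<or> zero_col Q t" for t
    by blast
  with mixed show ?thesis
    using T_indep_if_zero_rows T_indep_if_zero_cols by blast
qed

theorem mainTheorem16:
  fixes P Qt :: dist3
  assumes "is_dist P"
    and "pT P False > 0" and "pT P True > 0"
    and "((H_X_given_T_eq P False = 0 \<and> H_Y_given_T_eq P True = 0) \<or>
          (H_X_given_T_eq P True = 0 \<and> H_Y_given_T_eq P False = 0))
         \<longrightarrow> (H_X_given_T P = 0 \<or> H_Y_given_T P = 0)"
    and "Qt \<in> DeltaP P"
    and "\<forall>Q\<in>DeltaP P. H_T_given_XY Q \<le> H_T_given_XY Qt"
    and "Qt \<in> rel_interior (DeltaP P)"
  shows "T_indep_X_given_Y Qt \<or> T_indep_Y_given_X Qt"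
proof -
  have nonneg: "\<forall>i. 0 \<le> Qt $ i" and "pXT Qt = pXT P" "pYT Qt = pYT P"
    using assms(5) by (auto simp: DeltaP_def is_dist_def fun_eq_iff)
  moreover have pT: "\<forall>t. 0 < pT P t"
    using assms(2,3) by (simp add: all_bool_eq)
  ultimately have "H_X_given_T_eq P t = 0 \<longleftrightarrow> zero_row Qt t" "H_Y_given_T_eq P t = 0 \<longleftrightarrow> zero_col Qt t" for t
    using assms(1) by (simp_all add: H_X_given_T_eq_eq_0_iff H_Y_given_T_eq_eq_0_iff zero_row_iff_pXT zero_col_iff_pYT)
  moreover have "(\<forall>x y. 0 < Qt $ (t,x,y)) \<and> unit_cross_ratio Qt t \<or> zero_row Qt t \<or> zero_col Qt t" for t
    using rel_interior_slice_cases[OF assms(7)] maximizer_unit_cross_ratio[OF assms(5,6)] by blast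
  ultimately show ?thesis
    using assms(4) H_X_given_T_eq_0_iff[OF assms(1) pT] H_Y_given_T_eq_0_iff[OF assms(1) pT]
    by (intro T_indep_if_slice_cases) (simp_all add: all_bool_eq)
qed

end
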